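(* Let $\mathcal{P}$ be a finite poset, let $\mathcal{A},\mathcal{B}$ be families of downsets of $\mathcal{P}$, and let $p\in\mathcal{P}$. Define $\mathcal{A}^p_1=\{A\setminus{\downarrow}p: A\in\mathcal{A}\}$, $\mathcal{B}^p_1=\{B\setminus{\downarrow}p: B\in\mathcal{B},\ p\in B\}$, $\mathcal{A}^p_2=\{A: A\in\mathcal{A},\ p\notin A\}$, $\mathcal{B}^p_2=\{B\setminus{\uparrow}p: B\in\mathcal{B}\}$. Then $\mathcal{A}$ and $\mathcal{B}$ are dual over $\mathcal{L}(\mathcal{P})$ if and only if $\mathcal{A}^p_1$ and $\mathcal{B}^p_1$ are dual over $\mathcal{L}(\mathcal{P}\setminus{\downarrow}p)$ and $\mathcal{A}^p_2$ and $\mathcal{B}^p_2$ are dual over $\mathcal{L}(\mathcal{P}\setminus{\uparrow}p)$.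
   Context: For a finite poset $\mathcal{P}$, $\mathcal{L}(\mathcal{P})$ denotes the distributive lattice of all downsets (order ideals) of $\mathcal{P}$ ordered by inclusion; subsets $\mathcal{P}\setminus{\downarrow}p$ and $\mathcal{P}\setminus{\uparrow}p$ carry the induced order. ${\downarrow}p=\{q\in\mathcal{P}:q\le p\}$ and ${\uparrow}p=\{q\in\mathcal{P}:q\ge p\}$ (both contain $p$). Two families $\mathcal{A},\mathcal{B}$ of downsets of $\mathcal{P}$ are dual over $\mathcal{L}(\mathcal{P})$ if $A\not\subseteq B$ for all $A\in\mathcal{A},B\in\mathcal{B}$ (property ( * )), and for every downset $X$ of $\mathcal{P}$ either $X\subseteq B$ for some $B\in\mathcal{B}$ or $A\subseteq X$ for some $A\in\mathcal{A}$. *)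

theory Defs
  imports Main
begin

text \<open>A finite poset is modelled as a finite carrier set Q of a type with a partial
  order; subsets carry the induced order.\<close>

definition is_downset :: "'a::order set \<Rightarrow> 'a set \<Rightarrow> bool" where
  "is_downset Q D \<longleftrightarrow> D \<subseteq> Q \<and> (\<forall>x\<in>D. \<forall>y\<in>Q. y \<le> x \<longrightarrow> y \<in> D)"

definition down :: "'a::order set \<Rightarrow> 'a \<Rightarrow> 'a set" where
  "down Q p = {q\<in>Q. q \<le> p}"

definition up :: "'a::order set \<Rightarrow> 'a \<Rightarrow> 'a set" where
  "up Q p = {q\<in>Q. p \<le> q}"

definition dual_over :: "'a::order set \<Rightarrow> 'a set set \<Rightarrow> 'a set set \<Rightarrow> bool" where
  "dual_over Q \<A> \<B> \<longleftrightarrow>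
     (\<forall>A\<in>\<A>. \<forall>B\<in>\<B>. \<not> A \<subseteq> B) \<and>
     (\<forall>X. is_downset Q X \<longrightarrow> (\<exists>B\<in>\<B>. X \<subseteq> B) \<or> (\<exists>A\<in>\<A>. A \<subseteq> X))"

end

theory Submission
  imports Defs
begin

text \<open>A downset X of P either contains p, and is then recovered from its trace X - \<down>p on
  P - \<down>p by adding \<down>p back, or avoids p, and is then a downset of P - \<up>p. Both halves of
  duality, that no member of \<A> lies in a member of \<B> and that every downset lies above a
  member of \<A> or below a member of \<B>, split along this case distinction, the two cases being
  exactly the two smaller duality problems.\<close>

definition no_inclusion :: "'a set set \<Rightarrow> 'a set set \<Rightarrow> bool" where
  "no_inclusion \<A> \<B> \<longleftrightarrow> (\<forall>A\<in>\<A>. \<forall>B\<in>\<B>. \<not> A \<subseteq> B)"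

definition downset_cover :: "'a::order set \<Rightarrow> 'a set set \<Rightarrow> 'a set set \<Rightarrow> bool" where
  "downset_cover Q \<A> \<B> \<longleftrightarrow>
     (\<forall>X. is_downset Q X \<longrightarrow> (\<exists>B\<in>\<B>. X \<subseteq> B) \<or> (\<exists>A\<in>\<A>. A \<subseteq> X))"

lemma dual_over_iff: "dual_over Q \<A> \<B> \<longleftrightarrow> no_inclusion \<A> \<B> \<and> downset_cover Q \<A> \<B>"
  unfolding dual_over_def no_inclusion_def downset_cover_def ..

lemma down_subset_downset: "is_downset Q D \<Longrightarrow> p \<in> D \<Longrightarrow> down Q p \<subseteq> D"
  unfolding is_downset_def down_def by blast

lemma downset_disjoint_up:
  "is_downset Q D \<Longrightarrow> p \<notin> D \<Longrightarrow> p \<in> Q \<Longrightarrow> D \<inter> up Q p = {}"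
  unfolding is_downset_def up_def by blast

lemma is_downset_Diff_down:
  "is_downset Q X \<Longrightarrow> is_downset (Q - down Q p) (X - down Q p)"
  unfolding is_downset_def down_def by auto

lemma is_downset_Diff_down_iff:
  "is_downset (Q - down Q p) Y \<longleftrightarrow> is_downset Q (Y \<union> down Q p) \<and> Y \<inter> down Q p = {}"
  unfolding is_downset_def down_def by (auto dest: order_trans)

lemma is_downset_Diff_up_iff:
  "p \<in> Q \<Longrightarrow> is_downset (Q - up Q p) X \<longleftrightarrow> is_downset Q X \<and> p \<notin> X"
  unfolding is_downset_def up_def by (auto dest: order_trans)

lemma subset_downset_iff:
  assumes "is_downset Q B" and "p \<in> Q"
  shows "A \<subseteq> B \<longleftrightarrow> p \<in> B \<and> A - down Q p \<subseteq> B - down Q p \<or> p \<notin> A \<and> A \<subseteq> B - up Q p"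
  using down_subset_downset[OF assms(1)] downset_disjoint_up[OF assms(1) _ assms(2)] by blast

lemma no_inclusion_split:
  assumes "\<forall>B\<in>\<B>. is_downset Q B" and "p \<in> Q"
  shows "no_inclusion \<A> \<B> \<longleftrightarrow>
           no_inclusion ((\<lambda>A. A - down Q p) ` \<A>) ((\<lambda>B. B - down Q p) ` {B\<in>\<B>. p \<in> B}) \<and>
           no_inclusion {A\<in>\<A>. p \<notin> A} ((\<lambda>B. B - up Q p) ` \<B>)"
  using assms by (auto simp: no_inclusion_def subset_downset_iff[of Q _ p] simp del: Diff_subset_conv)

lemma all_downsets_Diff_down:
  assumes "p \<in> Q"
  shows "(\<forall>Y. is_downset (Q - down Q p) Y \<longrightarrow> R Y) \<longleftrightarrow>
         (\<forall>X. is_downset Q X \<longrightarrow> p \<in> X \<longrightarrow> R (X - down Q p))"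
proof (intro iffI allI impI)
  fix X assume "\<forall>Y. is_downset (Q - down Q p) Y \<longrightarrow> R Y" and "is_downset Q X"
  then show "R (X - down Q p)" by (simp add: is_downset_Diff_down)
next
  fix Y assume all: "\<forall>X. is_downset Q X \<longrightarrow> p \<in> X \<longrightarrow> R (X - down Q p)"
    and "is_downset (Q - down Q p) Y"
  then have "is_downset Q (Y \<union> down Q p)" and "Y = (Y \<union> down Q p) - down Q p"
    unfolding is_downset_Diff_down_iff by auto
  moreover have "p \<in> Y \<union> down Q p" using assms unfolding down_def by simp
  ultimately show "R Y" using all by metis
qed

lemma downset_cover_Diff_down_iff:
  assumes "\<forall>B\<in>\<B>. is_downset Q B" and "p \<in> Q"
  shows "downset_cover (Q - down Q p) ((\<lambda>A. A - down Q p) ` \<A>)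
           ((\<lambda>B. B - down Q p) ` {B\<in>\<B>. p \<in> B}) \<longleftrightarrow>
         (\<forall>X. is_downset Q X \<longrightarrow> p \<in> X \<longrightarrow> (\<exists>B\<in>\<B>. X \<subseteq> B) \<or> (\<exists>A\<in>\<A>. A \<subseteq> X))"
proof -
  have "p \<in> B \<and> X - down Q p \<subseteq> B - down Q p \<longleftrightarrow> X \<subseteq> B"
    if "is_downset Q X" "p \<in> X" "B \<in> \<B>" for X B
    using down_subset_downset[OF that(1,2)] down_subset_downset[of Q B p] assms(1) that(2,3)
    by blast
  moreover have "(\<exists>A\<in>\<A>. A - down Q p \<subseteq> X - down Q p) \<longleftrightarrow> (\<exists>A\<in>\<A>. A \<subseteq> X)"
    if "is_downset Q X" "p \<in> X" for X
    using down_subset_downset[OF that] by blast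
  ultimately show ?thesis
    unfolding downset_cover_def all_downsets_Diff_down[OF assms(2)]
    by (simp add: Bex_def cong: conj_cong)
qed

lemma downset_cover_Diff_up_iff:
  assumes "p \<in> Q"
  shows "downset_cover (Q - up Q p) {A\<in>\<A>. p \<notin> A} ((\<lambda>B. B - up Q p) ` \<B>) \<longleftrightarrow>
         (\<forall>X. is_downset Q X \<longrightarrow> p \<notin> X \<longrightarrow> (\<exists>B\<in>\<B>. X \<subseteq> B) \<or> (\<exists>A\<in>\<A>. A \<subseteq> X))"
proof -
  have "X \<subseteq> B - up Q p \<longleftrightarrow> X \<subseteq> B" if "is_downset Q X" "p \<notin> X" for X B
    using downset_disjoint_up[OF that assms] by blast
  moreover have "(\<exists>A\<in>{A\<in>\<A>. p \<notin> A}. A \<subseteq> X) \<longleftrightarrow> (\<exists>A\<in>\<A>. A \<subseteq> X)" if "p \<notin> X" for X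
    using that by blast
  ultimately show ?thesis
    unfolding downset_cover_def is_downset_Diff_up_iff[OF assms]
    by (simp add: Bex_def imp_conjL cong: conj_cong)
qed

lemma downset_cover_split:
  assumes "\<forall>B\<in>\<B>. is_downset Q B" and "p \<in> Q"
  shows "downset_cover Q \<A> \<B> \<longleftrightarrow>
           downset_cover (Q - down Q p) ((\<lambda>A. A - down Q p) ` \<A>)
             ((\<lambda>B. B - down Q p) ` {B\<in>\<B>. p \<in> B}) \<and>
           downset_cover (Q - up Q p) {A\<in>\<A>. p \<notin> A} ((\<lambda>B. B - up Q p) ` \<B>)"
  unfolding downset_cover_Diff_down_iff[OF assms] downset_cover_Diff_up_iff[OF assms(2)]
  unfolding downset_cover_def by blast

theorem lemma3:
  fixes P :: "'a::order set" and \<A> \<B> :: "'a set set" and p :: 'a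
  assumes "finite P"
    and "\<forall>A\<in>\<A>. is_downset P A"
    and "\<forall>B\<in>\<B>. is_downset P B"
    and "p \<in> P"
  shows "dual_over P \<A> \<B> \<longleftrightarrow>
           dual_over (P - down P p) ((\<lambda>A. A - down P p) ` \<A>)
                     ((\<lambda>B. B - down P p) ` {B\<in>\<B>. p \<in> B}) \<and>
           dual_over (P - up P p) {A\<in>\<A>. p \<notin> A} ((\<lambda>B. B - up P p) ` \<B>)"
  unfolding dual_over_iff no_inclusion_split[OF assms(3,4)] downset_cover_split[OF assms(3,4)]
  by blast

end
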